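(* Let $k\in\{1,\dots,N-1\}$. Let $(q^n)$, with $q^n=(\zeta^n_i,z^n_i)_{i\in\mathbf N}$, be a sequence of simple choreographic loops in $\Lambda$ satisfying $[z^n_0]=0$. Suppose $\|q^n\|_{H^1}\to\infty$ while $\mathcal A_k(q^n;2\pi)$ stays bounded. Then: (a) $\|z^n_i\|_{H^1}$ is bounded uniformly in $i$ and $n$; (b) for each $i\in\mathbf N$, $|\zeta^n_i(t)|\to\infty$ uniformly in $t\in\mathbb R$; (c) after passing to a subsequence, for each $i\in\mathbf N$ there is $u_i\in\mathbb C$ with $|u_i|=1$ such that $\zeta_i^n(t)/|\zeta_i^n(t)|\to e^{-\mathrm ikt}u_i$ uniformly on $\mathbb R$.
   Context: Fix $N\ge2$ and $\mathbf N=\{0,\dots,N-1\}$. Positions are $q_i=(\zeta_i,z_i)\in\mathbb C\times\mathbb R$ with $\zeta_i=x_i+\mathrm iy_i$. - Loop space: $\Lambda=H^1(\mathbb R/2\pi\mathbb Z,\mathbb R^{3N})$. - Simple choreographic loops: a loop $q\in\Lambda$ is simple choreographic if $q_i(t)=q_0(t+2\pi i/N)$ for all $i,t$. - Potential: $U(q)=\sum_{i<j}1/|q_i-q_j|$. - Rotating-frame action: $\mathcal A_\omega(q;T)=\int_0^T\big(\tfrac12\sum_i(|\dot\zeta_i+\mathrm i\omega\zeta_i|^2+\dot z_i^2)+U(q)\big)dt$. - Mean: $[z_0]=\frac1{2\pi}\int_0^{2\pi}z_0$. *)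

theory Defs
  imports "HOL-Analysis.Analysis"
begin

text \<open>Weak derivative on the real line: g is locally integrable and
  f b - f a is the integral of g over [a,b]. (So f is locally absolutely
  continuous with derivative g a.e.)\<close>
definition weak_deriv :: "(real \<Rightarrow> real) \<Rightarrow> (real \<Rightarrow> real) \<Rightarrow> bool" where
  "weak_deriv f g \<longleftrightarrow>
     (\<forall>a b. set_integrable lborel {a..b} g) \<and>
     (\<forall>a b. a \<le> b \<longrightarrow> f b - f a = (LINT s:{a..b}|lborel. g s))"

text \<open>Real-valued H^1 functions on the circle R/2piZ (as 2pi-periodic functions on R).\<close>
definition H1_loop :: "(real \<Rightarrow> real) \<Rightarrow> bool" where
  "H1_loop f \<longleftrightarrow> (\<forall>t. f (t + 2*pi) = f t) \<and>
     (\<exists>g. weak_deriv f g \<and> set_integrable lborel {0..2*pi} (\<lambda>t. (g t)\<^sup>2))"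

text \<open>A chosen weak derivative (unique up to null sets).\<close>
definition wd :: "(real \<Rightarrow> real) \<Rightarrow> (real \<Rightarrow> real)" where
  "wd f = (SOME g. weak_deriv f g \<and> set_integrable lborel {0..2*pi} (\<lambda>t. (g t)\<^sup>2))"

definition cwd :: "(real \<Rightarrow> complex) \<Rightarrow> (real \<Rightarrow> complex)" where
  "cwd f = (\<lambda>t. Complex (wd (\<lambda>s. Re (f s)) t) (wd (\<lambda>s. Im (f s)) t))"

definition h1_sq :: "(real \<Rightarrow> real) \<Rightarrow> real" where
  "h1_sq f = (LINT t:{0..2*pi}|lborel. (f t)\<^sup>2 + (wd f t)\<^sup>2)"

definition h1_norm :: "(real \<Rightarrow> real) \<Rightarrow> real" where
  "h1_norm f = sqrt (h1_sq f)"

definition in_Lambda :: "nat \<Rightarrow> (nat \<Rightarrow> real \<Rightarrow> complex) \<Rightarrow> (nat \<Rightarrow> real \<Rightarrow> real) \<Rightarrow> bool" where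
  "in_Lambda N \<zeta> z \<longleftrightarrow> (\<forall>i<N. H1_loop (\<lambda>t. Re (\<zeta> i t)) \<and> H1_loop (\<lambda>t. Im (\<zeta> i t)) \<and> H1_loop (z i))"

definition Lambda_norm :: "nat \<Rightarrow> (nat \<Rightarrow> real \<Rightarrow> complex) \<Rightarrow> (nat \<Rightarrow> real \<Rightarrow> real) \<Rightarrow> real" where
  "Lambda_norm N \<zeta> z = sqrt (\<Sum>i<N. h1_sq (\<lambda>t. Re (\<zeta> i t)) + h1_sq (\<lambda>t. Im (\<zeta> i t)) + h1_sq (z i))"

definition simple_choreographic :: "nat \<Rightarrow> (nat \<Rightarrow> real \<Rightarrow> complex) \<Rightarrow> (nat \<Rightarrow> real \<Rightarrow> real) \<Rightarrow> bool" where
  "simple_choreographic N \<zeta> z \<longleftrightarrow>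
     (\<forall>i<N. \<forall>t. \<zeta> i t = \<zeta> 0 (t + 2*pi*real i / real N) \<and> z i t = z 0 (t + 2*pi*real i / real N))"

definition potU :: "nat \<Rightarrow> (nat \<Rightarrow> complex) \<Rightarrow> (nat \<Rightarrow> real) \<Rightarrow> ennreal" where
  "potU N \<zeta> z = (\<Sum>(i,j)\<in>{(i,j). i < j \<and> j < N}.
      (let d = sqrt ((cmod (\<zeta> i - \<zeta> j))\<^sup>2 + (z i - z j)\<^sup>2)
       in if d = 0 then \<infinity> else ennreal (1 / d)))"

definition action :: "nat \<Rightarrow> real \<Rightarrow> (nat \<Rightarrow> real \<Rightarrow> complex) \<Rightarrow> (nat \<Rightarrow> real \<Rightarrow> real) \<Rightarrow> real \<Rightarrow> ennreal" where
  "action N \<omega> \<zeta> z T = (\<integral>\<^sup>+ t\<in>{0..T}.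
      ennreal ((1/2) * (\<Sum>i<N. (cmod (cwd (\<zeta> i) t + \<i> * of_real \<omega> * \<zeta> i t))\<^sup>2 + (wd (z i) t)\<^sup>2))
      + potU N (\<lambda>i. \<zeta> i t) (\<lambda>i. z i t) \<partial>lborel)"

definition mean :: "(real \<Rightarrow> real) \<Rightarrow> real" where
  "mean f = (1 / (2*pi)) * (LINT t:{0..2*pi}|lborel. f t)"

end

(*
  An action bound B bounds the L2 norms of the vertical velocities z_i' and of the
  rotating-frame velocities zeta_i' + i k zeta_i by 2B, hence (by AM-GM over one period) the
  oscillation of z_0 and of the rotated loop w(t) = e^(ikt) zeta_0(t) by pi + B.  With mean zero, z_0 is bounded,
  which gives (a).  Since zeta_i is a time shift of zeta_0 and |zeta_0| = |w|, every
  |zeta_i(t)| lies within pi + B of m = |zeta_0(0)|, and the H1 norm of the configuration is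
  O(m + 1); so its blow-up forces m -> infinity, which gives (b).  Finally
  zeta_i(t)/|zeta_i(t)| differs from e^(-ik(t + 2 pi i/N)) w(0)/|w(0)| by at most
  2 (pi + B)/m, and a convergent subsequence of the unit numbers w(0)/|w(0)| gives (c).
*)

theory Submission
  imports Defs
begin

section \<open>Absolutely continuous functions and integrals\<close>

lemma set_integrable_continuous_mult:
  fixes g f :: "real \<Rightarrow> 'a::{real_normed_field, second_countable_topology, banach}"
  assumes g: "continuous_on {a..b} g" and f: "set_integrable lborel {a..b} f"
  shows "set_integrable lborel {a..b} (\<lambda>s. g s * f s)"
proof -
  obtain K where K: "\<And>s. s \<in> {a..b} \<Longrightarrow> norm (g s) \<le> K"
    using compact_imp_bounded[OF compact_continuous_image[OF g compact_Icc]] unfolding bounded_iff by blast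
  have "(\<lambda>s. indicator {a..b} s *\<^sub>R g s) \<in> borel_measurable lborel"
    using borel_measurable_continuous_on_indicator[OF _ g] by simp
  moreover have "(\<lambda>s. indicator {a..b} s *\<^sub>R f s) \<in> borel_measurable lborel"
    using f unfolding set_integrable_def by (rule borel_measurable_integrable)
  ultimately have "(\<lambda>s. (indicator {a..b} s *\<^sub>R g s) * (indicator {a..b} s *\<^sub>R f s)) \<in> borel_measurable lborel"
    by measurable
  moreover have "(\<lambda>s. (indicator {a..b} s *\<^sub>R g s) * (indicator {a..b} s *\<^sub>R f s))
      = (\<lambda>s. indicator {a..b} s *\<^sub>R (g s * f s))"
    by (auto simp: indicator_def)
  ultimately have "set_borel_measurable lborel {a..b} (\<lambda>s. g s * f s)"
    unfolding set_borel_measurable_def by simp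
  moreover have "AE s in lborel. s \<in> {a..b} \<longrightarrow> norm (g s * f s) \<le> norm (of_real K * f s)"
    using K by (auto simp: norm_mult intro!: mult_right_mono order_trans[OF _ abs_ge_self])
  ultimately show ?thesis
    by (rule set_integrable_bound[OF set_integrable_mult_right[OF f]])
qed

lemma integrable_triangle_kernel:
  fixes g \<psi> :: "real \<Rightarrow> complex"
  assumes \<psi>: "set_integrable lborel {a..b} \<psi>" and g: "continuous_on UNIV g"
  shows "integrable (lborel \<Otimes>\<^sub>M lborel)
    (\<lambda>(r, s). if r \<le> s \<and> s \<le> b then g s * (indicator {a..b} r *\<^sub>R \<psi> r) else 0)"
proof -
  define \<psi>' where "\<psi>' r = indicator {a..b} r *\<^sub>R \<psi> r" for r
  obtain K where K: "\<And>s. s \<in> {a..b} \<Longrightarrow> norm (g s) \<le> K"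
    using compact_imp_bounded[OF compact_continuous_image[OF continuous_on_subset[OF g subset_UNIV] compact_Icc]]
    unfolding bounded_iff by blast
  have \<psi>'_int: "integrable lborel \<psi>'" using \<psi> unfolding set_integrable_def \<psi>'_def .
  have [measurable]: "\<psi>' \<in> borel_measurable lborel" "g \<in> borel_measurable lborel"
    using \<psi>'_int borel_measurable_continuous_onI[OF g] by auto
  define D where "D = (\<lambda>(r, s). K * norm (\<psi>' r) * indicator {a..b} s)"
  have "integrable (lborel \<Otimes>\<^sub>M lborel) D"
  proof (rule lborel_pair.Fubini_integrable)
    show "D \<in> borel_measurable (lborel \<Otimes>\<^sub>M lborel)" unfolding D_def by measurable
    have "integrable lborel (indicat_real {a..b})"
      by (rule integrable_real_indicator) (auto simp: emeasure_lborel_Icc_eq)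
    then show "AE r in lborel. integrable lborel (\<lambda>s. D (r, s))"
      unfolding D_def by auto
    have "(\<lambda>r. \<integral>s. norm (D (r, s)) \<partial>lborel) = (\<lambda>r. \<bar>K\<bar> * norm (\<psi>' r) * measure lborel {a..b})"
      by (auto simp: D_def abs_mult)
    then show "integrable lborel (\<lambda>r. \<integral>s. norm (D (r, s)) \<partial>lborel)"
      using \<psi>'_int by simp
  qed
  moreover have "(\<lambda>(r, s). if r \<le> s \<and> s \<le> b then g s * \<psi>' r else 0)
      \<in> borel_measurable (lborel \<Otimes>\<^sub>M lborel)"
    by measurable
  moreover have "norm (if r \<le> s \<and> s \<le> b then g s * \<psi>' r else 0) \<le> norm (D (r, s))" for r s
    using K[of s] by (auto simp: D_def \<psi>'_def indicator_def norm_mult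
        intro!: order_trans[OF _ abs_ge_self] mult_right_mono)
  then have "AE x in lborel \<Otimes>\<^sub>M lborel.
      norm ((\<lambda>(r, s). if r \<le> s \<and> s \<le> b then g s * \<psi>' r else 0) x) \<le> norm (D x)"
    by auto
  ultimately show ?thesis
    unfolding \<psi>'_def[symmetric] by (rule Bochner_Integration.integrable_bound)
qed

lemma set_integral_triangle_swap:
  fixes g \<psi> :: "real \<Rightarrow> complex"
  assumes \<psi>: "set_integrable lborel {a..b} \<psi>" and g: "continuous_on UNIV g"
  shows "(LINT s:{a..b}|lborel. g s * (LINT r:{a..s}|lborel. \<psi> r))
       = (LINT r:{a..b}|lborel. \<psi> r * (LINT s:{r..b}|lborel. g s))"
proof -
  define \<psi>' where "\<psi>' r = indicator {a..b} r *\<^sub>R \<psi> r" for r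
  define H where "H r s = (if r \<le> s \<and> s \<le> b then g s * \<psi>' r else 0)" for r s
  have H_int: "integrable (lborel \<Otimes>\<^sub>M lborel) (\<lambda>(r, s). H r s)"
    using integrable_triangle_kernel[OF \<psi> g] unfolding H_def \<psi>'_def .
  have inner_r: "(\<integral>r. H r s \<partial>lborel) = indicator {a..b} s *\<^sub>R (g s * (LINT r:{a..s}|lborel. \<psi> r))" for s
  proof (cases "s \<in> {a..b}")
    case True
    then have "(\<lambda>r. H r s) = (\<lambda>r. g s * (indicator {a..s} r *\<^sub>R \<psi> r))"
      by (auto simp: H_def \<psi>'_def indicator_def)
    then have "(\<integral>r. H r s \<partial>lborel) = g s * (LINT r:{a..s}|lborel. \<psi> r)"
      unfolding set_lebesgue_integral_def by (simp only: integral_mult_right_zero)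
    then show ?thesis using True by simp
  next
    case False
    then have "(\<lambda>r. H r s) = (\<lambda>r. 0)" by (auto simp: H_def \<psi>'_def indicator_def)
    then show ?thesis using False by simp
  qed
  have inner_s: "(\<integral>s. H r s \<partial>lborel) = \<psi>' r * (LINT s:{r..b}|lborel. g s)" for r
  proof -
    have "(\<lambda>s. H r s) = (\<lambda>s. \<psi>' r * (indicator {r..b} s *\<^sub>R g s))"
      by (auto simp: H_def indicator_def)
    then show ?thesis
      unfolding set_lebesgue_integral_def by (simp only: integral_mult_right_zero)
  qed
  have "(\<integral>s. (\<integral>r. H r s \<partial>lborel) \<partial>lborel) = (\<integral>r. (\<integral>s. H r s \<partial>lborel) \<partial>lborel)"
    using lborel_pair.Fubini_integral[of H] H_int by simp
  then show ?thesis
    unfolding inner_r inner_s by (simp add: set_lebesgue_integral_def \<psi>'_def)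
qed

lemma continuous_on_indefinite_integral:
  fixes F G :: "real \<Rightarrow> 'a::euclidean_space"
  assumes G: "set_integrable lborel {a..b} G"
    and F: "\<And>x. x \<in> {a..b} \<Longrightarrow> F x = F a + (LINT s:{a..x}|lborel. G s)"
  shows "continuous_on {a..b} F"
proof (rule continuous_on_eq)
  show "continuous_on {a..b} (\<lambda>x. F a + integral {a..x} G)"
    by (intro continuous_intros indefinite_integral_continuous_1 set_borel_integral_eq_integral(1) G)
  fix x assume x: "x \<in> {a..b}"
  then have "set_integrable lborel {a..x} G"
    by (intro set_integrable_subset[OF G]) auto
  then show "F a + integral {a..x} G = F x"
    using F[OF x] by (simp add: set_borel_integral_eq_integral(2))
qed

lemma integration_by_parts_indefinite_integral:
  fixes F G \<phi> \<phi>' :: "real \<Rightarrow> complex"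
  assumes G: "set_integrable lborel {a..b} G"
    and F: "\<And>x. x \<in> {a..b} \<Longrightarrow> F x = F a + (LINT s:{a..x}|lborel. G s)"
    and \<phi>: "\<And>s. (\<phi> has_vector_derivative \<phi>' s) (at s)" and \<phi>': "continuous_on UNIV \<phi>'"
    and ab: "a \<le> b"
  shows "\<phi> b * F b - \<phi> a * F a = (LINT s:{a..b}|lborel. \<phi> s * G s + \<phi>' s * F s)"
proof -
  have contF: "continuous_on {a..b} F" by (rule continuous_on_indefinite_integral[OF G F])
  have intG: "(LINT s:{a..x}|lborel. G s) = F x - F a" if "x \<in> {a..b}" for x
    using F[OF that] by simp
  have cont\<phi>: "continuous_on {a..b} \<phi>"
    using \<phi> by (intro continuous_at_imp_continuous_on ballI has_vector_derivative_continuous)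
  have cont\<phi>': "continuous_on {a..b} \<phi>'" using continuous_on_subset[OF \<phi>'] by blast
  have FTC: "(LINT s:{r..b}|lborel. \<phi>' s) = \<phi> b - \<phi> r" if "r \<le> b" for r
    unfolding set_lebesgue_integral_def
    by (rule integral_FTC_Icc[OF that has_vector_derivative_at_within[OF \<phi>] continuous_on_subset[OF \<phi>']]) auto
  have i1: "set_integrable lborel {a..b} (\<lambda>s. \<phi>' s * F s)"
    by (intro borel_integrable_atLeastAtMost' continuous_intros cont\<phi>' contF)
  have i2: "set_integrable lborel {a..b} (\<lambda>s. \<phi> s * G s)"
    by (rule set_integrable_continuous_mult[OF cont\<phi> G])
  have "(LINT s:{a..b}|lborel. \<phi>' s * F s) - (\<phi> b - \<phi> a) * F a
      = (LINT s:{a..b}|lborel. \<phi>' s * (LINT r:{a..s}|lborel. G r))"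
  proof -
    have "(LINT s:{a..b}|lborel. \<phi>' s * (LINT r:{a..s}|lborel. G r))
        = (LINT s:{a..b}|lborel. \<phi>' s * F s - \<phi>' s * F a)"
      by (intro set_lebesgue_integral_cong) (simp_all add: intG algebra_simps)
    also have "\<dots> = (LINT s:{a..b}|lborel. \<phi>' s * F s) - (LINT s:{a..b}|lborel. \<phi>' s) * F a"
      using i1 borel_integrable_atLeastAtMost'[OF cont\<phi>']
      by simp
    finally show ?thesis using FTC[OF ab] by simp
  qed
  also have "\<dots> = (LINT r:{a..b}|lborel. G r * (LINT s:{r..b}|lborel. \<phi>' s))"
    by (rule set_integral_triangle_swap[OF G \<phi>'])
  also have "\<dots> = (LINT r:{a..b}|lborel. \<phi> b * G r - \<phi> r * G r)"
    by (intro set_lebesgue_integral_cong) (simp_all add: FTC algebra_simps)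
  also have "\<dots> = \<phi> b * (F b - F a) - (LINT r:{a..b}|lborel. \<phi> r * G r)"
    using G i2 intG[of b] ab by simp
  finally have "(LINT s:{a..b}|lborel. \<phi>' s * F s) - (\<phi> b - \<phi> a) * F a
      = \<phi> b * (F b - F a) - (LINT r:{a..b}|lborel. \<phi> r * G r)" .
  moreover have "(LINT s:{a..b}|lborel. \<phi> s * G s + \<phi>' s * F s)
      = (LINT s:{a..b}|lborel. \<phi> s * G s) + (LINT s:{a..b}|lborel. \<phi>' s * F s)"
    using i2 i1 by (rule set_integral_add)
  ultimately show ?thesis by (simp add: algebra_simps)
qed

lemma set_integral_norm_le_half_square:
  fixes G :: "real \<Rightarrow> 'a::euclidean_space"
  assumes G: "set_integrable lborel {a..b} G" and G2: "set_integrable lborel {a..b} (\<lambda>t. (norm (G t))\<^sup>2)"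
    and ab: "a \<le> b"
  shows "(LINT t:{a..b}|lborel. norm (G t)) \<le> ((b - a) + (LINT t:{a..b}|lborel. (norm (G t))\<^sup>2)) / 2"
proof -
  have one: "set_integrable lborel {a..b} (\<lambda>t. 1::real)"
    by (intro borel_integrable_atLeastAtMost' continuous_intros)
  have "(LINT t:{a..b}|lborel. norm (G t)) \<le> (LINT t:{a..b}|lborel. (1 + (norm (G t))\<^sup>2) / 2)"
  proof (rule set_integral_mono)
    show "set_integrable lborel {a..b} (\<lambda>t. (1 + (norm (G t))\<^sup>2) / 2)"
      using one G2 by (intro set_integrable_divide set_integral_add)
    fix t
    show "norm (G t) \<le> (1 + (norm (G t))\<^sup>2) / 2"
      using zero_le_power2[of "norm (G t) - 1"] by (simp add: power2_eq_square algebra_simps)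
  qed (use G in \<open>rule set_integrable_norm\<close>)
  also have "\<dots> = ((b - a) + (LINT t:{a..b}|lborel. (norm (G t))\<^sup>2)) / 2"
    using set_integral_add(2)[OF one G2] ab by (simp add: set_lebesgue_integral_def)
  finally show ?thesis .
qed

lemma set_integral_le_of_nn_integral_le:
  fixes h :: "real \<Rightarrow> real"
  assumes h: "set_integrable lborel A h" and nonneg: "\<And>t. 0 \<le> h t"
    and le: "(\<integral>\<^sup>+ t\<in>A. ennreal (h t) \<partial>lborel) \<le> ennreal B" and B: "0 \<le> B"
  shows "(LINT t:A|lborel. h t) \<le> B"
proof -
  have "(\<integral>\<^sup>+ t\<in>A. ennreal (h t) \<partial>lborel) = ennreal (LINT t:A|lborel. h t)"
    using nonneg h unfolding set_lebesgue_integral_def set_integrable_def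
    by (subst nn_integral_eq_integral[symmetric]) (auto intro!: nn_integral_cong simp: indicator_def)
  then show ?thesis using le B by simp
qed

section \<open>Periodic functions\<close>

lemma periodic_shift_int:
  fixes f :: "real \<Rightarrow> 'a" and p :: real
  assumes per: "\<And>t. f (t + p) = f t"
  shows "f (t + of_int m * p) = f t"
proof -
  have nat: "f (t + real n * p) = f t" for n :: nat and t
    by (induction n arbitrary: t) (auto simp: algebra_simps, metis add.assoc per)
  show ?thesis
  proof (cases "m \<ge> 0")
    case True
    then show ?thesis using nat[of t "nat m"] by simp
  next
    case False
    then show ?thesis using nat[of "t + of_int m * p" "nat (- m)"] by simp
  qed
qed

lemma periodic_value_in_period:
  fixes f :: "real \<Rightarrow> 'a" and p :: real
  assumes per: "\<And>t. f (t + p) = f t" and p: "0 < p"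
  shows "\<exists>s\<in>{0..p}. f t = f s"
proof
  define s where "s = t - of_int \<lfloor>t / p\<rfloor> * p"
  have "of_int \<lfloor>t / p\<rfloor> * p \<le> t" "t \<le> (of_int \<lfloor>t / p\<rfloor> + 1) * p"
    using p floor_divide_lower[OF p, of t] floor_divide_upper[OF p, of t] by (auto simp: algebra_simps)
  then show "s \<in> {0..p}" unfolding s_def by (auto simp: algebra_simps)
  show "f t = f s"
    using periodic_shift_int[of f p s "\<lfloor>t / p\<rfloor>", OF per] unfolding s_def by simp
qed

lemma periodic_oscillation_le:
  fixes F G :: "real \<Rightarrow> 'a::euclidean_space"
  assumes per: "\<And>t. F (t + p) = F t" and p: "0 < p"
    and G: "set_integrable lborel {0..p} G"
    and FG: "\<And>a b. 0 \<le> a \<Longrightarrow> a \<le> b \<Longrightarrow> b \<le> p \<Longrightarrow> F b - F a = (LINT s:{a..b}|lborel. G s)"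
    and G2: "set_integrable lborel {0..p} (\<lambda>t. (norm (G t))\<^sup>2)"
  shows "norm (F t - F s) \<le> p / 2 + (LINT t:{0..p}|lborel. (norm (G t))\<^sup>2) / 2"
proof -
  let ?E = "(LINT t:{0..p}|lborel. (norm (G t))\<^sup>2)"
  have within: "norm (F b - F a) \<le> p / 2 + ?E / 2" if ab: "0 \<le> a" "a \<le> b" "b \<le> p" for a b
  proof -
    have sub: "{a..b} \<subseteq> {0..p}" using ab by auto
    have Gab: "set_integrable lborel {a..b} G" "set_integrable lborel {a..b} (\<lambda>t. (norm (G t))\<^sup>2)"
      using set_integrable_subset[OF G _ sub] set_integrable_subset[OF G2 _ sub] by auto
    have "norm (F b - F a) \<le> (LINT t:{a..b}|lborel. norm (G t))"
      unfolding FG[OF ab] by (rule set_integral_norm_bound[OF Gab(1)])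
    also have "\<dots> \<le> ((b - a) + (LINT t:{a..b}|lborel. (norm (G t))\<^sup>2)) / 2"
      by (rule set_integral_norm_le_half_square[OF Gab ab(2)])
    also have "(LINT t:{a..b}|lborel. (norm (G t))\<^sup>2) \<le> ?E"
      using Gab(2) G2 sub unfolding set_lebesgue_integral_def set_integrable_def
      by (intro integral_mono) (auto simp: indicator_def)
    finally show ?thesis using ab by (simp add: field_simps)
  qed
  obtain t' s' where t': "t' \<in> {0..p}" "F t = F t'" and s': "s' \<in> {0..p}" "F s = F s'"
    using periodic_value_in_period[of F p, OF per p] by meson
  show ?thesis
  proof (cases "s' \<le> t'")
    case True
    then show ?thesis using within[of s' t'] t' s' by auto
  next
    case False
    then show ?thesis using within[of t' s'] t' s' by (auto simp: norm_minus_commute)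
  qed
qed

lemma exp_i_nat_mult_periodic:
  "exp (\<i> * of_real (real k * (t + 2*pi))) = exp (\<i> * of_real (real k * t))"
proof -
  have "\<i> * of_real (real k * (t + 2*pi)) = \<i> * of_real (real k * t) + \<i> * (of_int (int k) * (of_real pi * 2))"
    by (simp add: algebra_simps)
  then show ?thesis by (simp only: exp_plus_2pin)
qed

section \<open>Directions and limits\<close>

lemma norm_sgn_diff_le:
  fixes x y :: "'a::real_normed_vector"
  assumes "y \<noteq> 0"
  shows "norm (sgn x - sgn y) \<le> 2 * norm (x - y) / norm y"
proof (cases "x = 0")
  case True
  then show ?thesis using assms by (simp add: norm_sgn)
next
  case False
  have ny: "0 < norm y" using assms by simp
  have "sgn x - sgn y = (x - y) /\<^sub>R norm y + ((norm y - norm x) / norm y) *\<^sub>R sgn x"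
    using False ny by (simp add: sgn_div_norm algebra_simps divide_inverse)
  then have "norm (sgn x - sgn y) \<le> norm (x - y) / norm y + \<bar>norm y - norm x\<bar> / norm y"
    using norm_triangle_ineq[of "(x - y) /\<^sub>R norm y" "((norm y - norm x) / norm y) *\<^sub>R sgn x"] False
    by (simp add: norm_sgn divide_inverse_commute abs_mult)
  also have "\<bar>norm y - norm x\<bar> \<le> norm (x - y)"
    by (metis norm_minus_commute norm_triangle_ineq3)
  finally show ?thesis using ny by (simp add: divide_right_mono add_divide_distrib[symmetric])
qed

lemma complex_div_cmod_eq_sgn: "x / of_real (cmod x) = sgn x"
  by (simp add: sgn_div_norm divide_inverse scaleR_conv_of_real mult.commute)

lemma convergent_subseq_sgn:
  fixes x :: "nat \<Rightarrow> 'a::{real_normed_vector, heine_borel}"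
  assumes "eventually (\<lambda>n. x n \<noteq> 0) sequentially"
  shows "\<exists>r u. strict_mono r \<and> norm u = 1 \<and> (\<lambda>n. sgn (x (r n))) \<longlonglongrightarrow> u"
proof -
  have "\<exists>u\<in>cball 0 1. \<exists>r. strict_mono r \<and> ((\<lambda>n. sgn (x n)) \<circ> r) \<longlonglongrightarrow> u"
    by (rule compact_imp_seq_compact[OF compact_cball, unfolded seq_compact_def, rule_format])
      (simp add: norm_sgn)
  then obtain u r where r: "strict_mono r" and lim: "(\<lambda>n. sgn (x (r n))) \<longlonglongrightarrow> u"
    unfolding o_def by blast
  have "eventually (\<lambda>n. norm (sgn (x (r n))) = 1) sequentially"
    using eventually_subseq[OF r assms] by eventually_elim (simp add: norm_sgn)
  then have "(\<lambda>n. norm (sgn (x (r n)))) \<longlonglongrightarrow> 1" by (rule tendsto_eventually)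
  then have "norm u = 1" using tendsto_norm[OF lim] LIMSEQ_unique by blast
  then show ?thesis using r lim by auto
qed

lemma uniform_limit_of_unit_factor:
  fixes f :: "'i \<Rightarrow> 'a \<Rightarrow> complex"
  assumes a: "(a \<longlongrightarrow> u) F" and \<epsilon>: "(\<epsilon> \<longlongrightarrow> 0) F"
    and est: "eventually (\<lambda>n. \<forall>t. norm (f n t - E t * a n) \<le> \<epsilon> n) F"
    and E: "\<And>t. norm (E t) = 1"
  shows "uniform_limit UNIV f (\<lambda>t. E t * u) F"
proof (rule uniform_limitI)
  fix e :: real assume e: "0 < e"
  have "eventually (\<lambda>n. dist (a n) u < e / 2) F" "eventually (\<lambda>n. dist (\<epsilon> n) 0 < e / 2) F"
    using tendsto_iff[THEN iffD1, OF a] tendsto_iff[THEN iffD1, OF \<epsilon>] e half_gt_zero by blast+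
  with est show "eventually (\<lambda>n. \<forall>t\<in>UNIV. dist (f n t) (E t * u) < e) F"
  proof eventually_elim
    case (elim n)
    show ?case
    proof
      fix t
      have "dist (f n t) (E t * u) \<le> norm (f n t - E t * a n) + norm (E t * (a n - u))"
        unfolding dist_norm by (rule order_trans[OF _ norm_triangle_ineq]) (simp add: algebra_simps)
      also have "\<dots> < e"
      proof -
        have "norm (f n t - E t * a n) \<le> \<epsilon> n" using elim(1) by blast
        moreover have "norm (E t * (a n - u)) = dist (a n) u" by (simp add: norm_mult E dist_norm)
        ultimately show ?thesis
          using elim(2,3) abs_ge_self[of "\<epsilon> n"] dist_real_def[of "\<epsilon> n" 0] by linarith
      qed
      finally show "dist (f n t) (E t * u) < e" .
    qed
  qed
qed

lemma filterlim_at_top_of_linear_bound: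
  fixes f g :: "'i \<Rightarrow> real"
  assumes f: "filterlim f at_top F" and bound: "\<And>n. f n \<le> A * g n + C" and A: "0 < A"
  shows "filterlim g at_top F"
  unfolding filterlim_at_top
proof
  fix Z
  have "eventually (\<lambda>n. A * Z + C \<le> f n) F" using f unfolding filterlim_at_top by blast
  then show "eventually (\<lambda>n. Z \<le> g n) F"
  proof eventually_elim
    case (elim n)
    then have "A * Z \<le> A * g n" using bound[of n] by linarith
    then show ?case using A by simp
  qed
qed

section \<open>\<open>H\<^sup>1\<close> loops\<close>

definition H1_cloop :: "(real \<Rightarrow> complex) \<Rightarrow> bool" where
  "H1_cloop \<zeta> \<longleftrightarrow> H1_loop (\<lambda>t. Re (\<zeta> t)) \<and> H1_loop (\<lambda>t. Im (\<zeta> t))"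

lemma H1_loop_wd:
  assumes "H1_loop f"
  shows "weak_deriv f (wd f)" and "set_integrable lborel {0..2*pi} (\<lambda>t. (wd f t)\<^sup>2)"
proof -
  have "\<exists>g. weak_deriv f g \<and> set_integrable lborel {0..2*pi} (\<lambda>t. (g t)\<^sup>2)"
    using assms unfolding H1_loop_def by blast
  from someI_ex[OF this] show "weak_deriv f (wd f)" "set_integrable lborel {0..2*pi} (\<lambda>t. (wd f t)\<^sup>2)"
    unfolding wd_def by blast+
qed

lemma H1_loop_periodic: "H1_loop f \<Longrightarrow> f (t + 2*pi) = f t"
  unfolding H1_loop_def by blast

lemma H1_loop_integrable_wd: "H1_loop f \<Longrightarrow> set_integrable lborel {a..b} (wd f)"
  using H1_loop_wd(1) unfolding weak_deriv_def by blast

lemma H1_loop_indefinite_integral: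
  "H1_loop f \<Longrightarrow> x \<in> {a..b} \<Longrightarrow> f x = f a + (LINT s:{a..x}|lborel. wd f s)"
  using H1_loop_wd(1) unfolding weak_deriv_def by (metis atLeastAtMost_iff diff_add_cancel add.commute)

lemma H1_loop_continuous_on: "H1_loop f \<Longrightarrow> continuous_on {a..b} f"
  by (rule continuous_on_indefinite_integral[OF H1_loop_integrable_wd H1_loop_indefinite_integral])

lemma H1_cloop_periodic: "H1_cloop \<zeta> \<Longrightarrow> \<zeta> (t + 2*pi) = \<zeta> t"
  unfolding H1_cloop_def complex_eq_iff by (auto dest: H1_loop_periodic)

lemma cwd_eq: "cwd \<zeta> t = of_real (wd (\<lambda>s. Re (\<zeta> s)) t) + \<i> * of_real (wd (\<lambda>s. Im (\<zeta> s)) t)"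
  unfolding cwd_def by (simp add: Complex_eq)

lemma norm_cwd_squared: "(cmod (cwd \<zeta> t))\<^sup>2 = (wd (\<lambda>s. Re (\<zeta> s)) t)\<^sup>2 + (wd (\<lambda>s. Im (\<zeta> s)) t)\<^sup>2"
  unfolding cwd_def by (simp add: cmod_power2)

lemma H1_cloop_integrable_cwd:
  assumes "H1_cloop \<zeta>"
  shows "set_integrable lborel {a..b} (cwd \<zeta>)"
proof -
  have "set_integrable lborel {a..b} (\<lambda>s. complex_of_real (wd (\<lambda>s. Re (\<zeta> s)) s))"
       "set_integrable lborel {a..b} (\<lambda>s. complex_of_real (wd (\<lambda>s. Im (\<zeta> s)) s))"
    using assms H1_loop_integrable_wd unfolding H1_cloop_def set_integrable_def
    by (simp_all add: scaleR_conv_of_real flip: of_real_mult)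
  then show ?thesis
    unfolding cwd_eq[abs_def] by (intro set_integral_add set_integrable_mult_right)
qed

lemma H1_cloop_indefinite_integral:
  assumes "H1_cloop \<zeta>" and x: "x \<in> {a..b}"
  shows "\<zeta> x = \<zeta> a + (LINT s:{a..x}|lborel. cwd \<zeta> s)"
proof -
  let ?g1 = "wd (\<lambda>s. Re (\<zeta> s))" and ?g2 = "wd (\<lambda>s. Im (\<zeta> s))"
  have h1: "H1_loop (\<lambda>s. Re (\<zeta> s))" "H1_loop (\<lambda>s. Im (\<zeta> s))"
    using assms(1) unfolding H1_cloop_def by auto
  have "set_integrable lborel {a..x} (\<lambda>s. complex_of_real (?g1 s))"
       "set_integrable lborel {a..x} (\<lambda>s. complex_of_real (?g2 s))"
    using h1 H1_loop_integrable_wd unfolding set_integrable_def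
    by (simp_all add: scaleR_conv_of_real flip: of_real_mult)
  then have "(LINT s:{a..x}|lborel. cwd \<zeta> s)
      = of_real (LINT s:{a..x}|lborel. ?g1 s) + \<i> * of_real (LINT s:{a..x}|lborel. ?g2 s)"
    unfolding cwd_eq[abs_def] by (simp add: set_integral_add set_integral_complex_of_real)
  also have "\<dots> = \<zeta> x - \<zeta> a"
    using H1_loop_indefinite_integral[OF h1(1) x] H1_loop_indefinite_integral[OF h1(2) x]
    by (simp add: complex_eq_iff)
  finally show ?thesis by simp
qed

lemma H1_cloop_continuous_on: "H1_cloop \<zeta> \<Longrightarrow> continuous_on {a..b} \<zeta>"
  by (rule continuous_on_indefinite_integral[OF H1_cloop_integrable_cwd H1_cloop_indefinite_integral])

lemma power2_norm_add_le:
  fixes x y :: "'a::real_normed_vector"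
  shows "(norm (x + y))\<^sup>2 \<le> 2 * (norm x)\<^sup>2 + 2 * (norm y)\<^sup>2"
proof -
  have "(norm (x + y))\<^sup>2 \<le> (norm x + norm y)\<^sup>2"
    by (simp add: power_mono norm_triangle_ineq)
  also have "\<dots> \<le> 2 * (norm x)\<^sup>2 + 2 * (norm y)\<^sup>2"
    using zero_le_power2[of "norm x - norm y"] by (simp add: power2_eq_square algebra_simps)
  finally show ?thesis .
qed

(* Velocity in the frame rotating with angular speed omega: the rotated loop e^(i omega t) zeta(t)
   has derivative e^(i omega t) (zeta'(t) + i omega zeta(t)). *)
definition rotating_velocity :: "real \<Rightarrow> (real \<Rightarrow> complex) \<Rightarrow> real \<Rightarrow> complex" where
  "rotating_velocity \<omega> \<zeta> t = cwd \<zeta> t + \<i> * of_real \<omega> * \<zeta> t"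

lemma has_vector_derivative_cis_linear:
  "((\<lambda>s. exp (\<i> * of_real (\<omega> * s))) has_vector_derivative \<i> * of_real \<omega> * exp (\<i> * of_real (\<omega> * s))) (at s)"
proof -
  have "((\<lambda>z. exp (\<i> * (of_real \<omega> * z))) has_field_derivative
      \<i> * of_real \<omega> * exp (\<i> * (of_real \<omega> * of_real s))) (at (of_real s))"
    by (auto intro!: derivative_eq_intros simp: algebra_simps)
  from has_vector_derivative_real_field[OF this] show ?thesis by simp
qed

lemma rotating_velocity_integrable:
  assumes "H1_cloop \<zeta>"
  shows "set_integrable lborel {a..b} (rotating_velocity \<omega> \<zeta>)"
  unfolding rotating_velocity_def[abs_def]
  by (intro set_integral_add H1_cloop_integrable_cwd[OF assms] borel_integrable_atLeastAtMost'
      continuous_intros H1_cloop_continuous_on[OF assms])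

lemma rotated_loop_increment:
  assumes "H1_cloop \<zeta>" and "a \<le> b"
  shows "exp (\<i> * of_real (\<omega> * b)) * \<zeta> b - exp (\<i> * of_real (\<omega> * a)) * \<zeta> a
       = (LINT s:{a..b}|lborel. exp (\<i> * of_real (\<omega> * s)) * rotating_velocity \<omega> \<zeta> s)"
  unfolding rotating_velocity_def distrib_left
  by (subst integration_by_parts_indefinite_integral[OF H1_cloop_integrable_cwd[OF assms(1)]
        H1_cloop_indefinite_integral[OF assms(1)] has_vector_derivative_cis_linear _ assms(2)])
     (auto intro!: continuous_intros set_lebesgue_integral_cong simp: algebra_simps)

lemma rotating_velocity_square_integrable:
  assumes "H1_cloop \<zeta>"
  shows "set_integrable lborel {0..2*pi} (\<lambda>t. (cmod (rotating_velocity \<omega> \<zeta> t))\<^sup>2)"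
proof -
  let ?g1 = "wd (\<lambda>s. Re (\<zeta> s))" and ?g2 = "wd (\<lambda>s. Im (\<zeta> s))"
  let ?I = "{0..2*pi}"
  have "set_integrable lborel ?I (\<lambda>t. (?g1 t)\<^sup>2)" "set_integrable lborel ?I (\<lambda>t. (?g2 t)\<^sup>2)"
    using assms H1_loop_wd(2) unfolding H1_cloop_def by auto
  moreover have "set_integrable lborel ?I (\<lambda>t. (cmod (\<zeta> t))\<^sup>2)"
    by (intro borel_integrable_atLeastAtMost' continuous_intros H1_cloop_continuous_on[OF assms])
  ultimately have bound: "set_integrable lborel ?I (\<lambda>t. 2 * ((?g1 t)\<^sup>2 + (?g2 t)\<^sup>2) + 2 * \<omega>\<^sup>2 * (cmod (\<zeta> t))\<^sup>2)"
    by (intro set_integral_add set_integrable_mult_right)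
  have "(\<lambda>t. indicator ?I t *\<^sub>R rotating_velocity \<omega> \<zeta> t) \<in> borel_measurable lborel"
    using rotating_velocity_integrable[OF assms] unfolding set_integrable_def
    by (rule borel_measurable_integrable)
  then have "(\<lambda>t. (cmod (indicator ?I t *\<^sub>R rotating_velocity \<omega> \<zeta> t))\<^sup>2) \<in> borel_measurable lborel"
    by measurable
  moreover have "(\<lambda>t. (cmod (indicator ?I t *\<^sub>R rotating_velocity \<omega> \<zeta> t))\<^sup>2)
      = (\<lambda>t. indicator ?I t *\<^sub>R (cmod (rotating_velocity \<omega> \<zeta> t))\<^sup>2)"
    by (auto simp: indicator_def)
  ultimately have "set_borel_measurable lborel ?I (\<lambda>t. (cmod (rotating_velocity \<omega> \<zeta> t))\<^sup>2)"
    unfolding set_borel_measurable_def by simp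
  moreover have "(cmod (rotating_velocity \<omega> \<zeta> t))\<^sup>2 \<le> 2 * ((?g1 t)\<^sup>2 + (?g2 t)\<^sup>2) + 2 * \<omega>\<^sup>2 * (cmod (\<zeta> t))\<^sup>2" for t
    using power2_norm_add_le[of "cwd \<zeta> t" "\<i> * of_real \<omega> * \<zeta> t"]
    by (simp add: rotating_velocity_def norm_cwd_squared norm_mult power_mult_distrib)
  ultimately show ?thesis
    by (intro set_integrable_bound[OF bound]) auto
qed

lemma mean_zero_abs_le:
  assumes f: "continuous_on {0..2*pi} f" and m: "mean f = 0" and osc: "\<And>s. \<bar>f t - f s\<bar> \<le> D"
  shows "\<bar>f t\<bar> \<le> D"
proof -
  let ?I = "{0..2*pi}"
  have fi: "set_integrable lborel ?I f" by (rule borel_integrable_atLeastAtMost'[OF f])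
  have ci: "set_integrable lborel ?I (\<lambda>s. c)" for c :: real
    by (intro borel_integrable_atLeastAtMost' continuous_intros)
  have "(LINT s:?I|lborel. f t - f s) = 2 * pi * f t"
    using m set_integral_diff(2)[OF ci fi] by (simp add: mean_def set_lebesgue_integral_def)
  then have "2 * pi * \<bar>f t\<bar> = \<bar>LINT s:?I|lborel. f t - f s\<bar>" by (simp add: abs_mult)
  also have "\<dots> \<le> (LINT s:?I|lborel. \<bar>f t - f s\<bar>)"
    using set_integral_norm_bound[OF set_integral_diff(1)[OF ci fi]] by simp
  also have "\<dots> \<le> (LINT s:?I|lborel. D)"
    using osc fi ci by (intro set_integral_mono set_integrable_abs set_integral_diff) auto
  also have "\<dots> = 2 * pi * D" by (simp add: set_lebesgue_integral_def)
  finally show ?thesis by simp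
qed

lemma h1_sq_le:
  assumes f: "H1_loop f" and bound: "\<And>t. \<bar>f t\<bar> \<le> R"
  shows "h1_sq f \<le> 2 * pi * R\<^sup>2 + (LINT t:{0..2*pi}|lborel. (wd f t)\<^sup>2)"
proof -
  let ?I = "{0..2*pi}"
  have f2: "set_integrable lborel ?I (\<lambda>t. (f t)\<^sup>2)"
    by (intro borel_integrable_atLeastAtMost' continuous_intros H1_loop_continuous_on[OF f])
  have ci: "set_integrable lborel ?I (\<lambda>t. R\<^sup>2)"
    by (intro borel_integrable_atLeastAtMost' continuous_intros)
  have wd2: "set_integrable lborel ?I (\<lambda>t. (wd f t)\<^sup>2)" by (rule H1_loop_wd(2)[OF f])
  have "(f t)\<^sup>2 \<le> R\<^sup>2" for t
    using bound[of t] abs_le_square_iff[of "f t" R] by simp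
  then have "h1_sq f \<le> (LINT t:?I|lborel. R\<^sup>2 + (wd f t)\<^sup>2)"
    unfolding h1_sq_def using f2 ci wd2 by (intro set_integral_mono set_integral_add) auto
  also have "\<dots> = 2 * pi * R\<^sup>2 + (LINT t:?I|lborel. (wd f t)\<^sup>2)"
    using set_integral_add(2)[OF ci wd2] by (simp add: set_lebesgue_integral_def)
  finally show ?thesis .
qed

lemma kinetic_nn_integral_le_action:
  assumes i: "i < N"
  shows "(\<integral>\<^sup>+ t\<in>{0..2*pi}. ennreal ((cmod (rotating_velocity \<omega> (\<zeta> i) t))\<^sup>2 / 2) \<partial>lborel)
      \<le> action N \<omega> \<zeta> z (2*pi)"
    and "(\<integral>\<^sup>+ t\<in>{0..2*pi}. ennreal ((wd (z i) t)\<^sup>2 / 2) \<partial>lborel) \<le> action N \<omega> \<zeta> z (2*pi)"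
proof -
  let ?x = "\<lambda>j t. (cmod (rotating_velocity \<omega> (\<zeta> j) t))\<^sup>2" and ?y = "\<lambda>j t. (wd (z j) t)\<^sup>2"
  let ?L = "\<lambda>t. ennreal ((1/2) * (\<Sum>j<N. ?x j t + ?y j t)) + potU N (\<lambda>j. \<zeta> j t) (\<lambda>j. z j t)"
  have sum: "?x i t + ?y i t \<le> (\<Sum>j<N. ?x j t + ?y j t)" for t
    by (rule member_le_sum) (use i in auto)
  have "?x i t \<le> (\<Sum>j<N. ?x j t + ?y j t)" "?y i t \<le> (\<Sum>j<N. ?x j t + ?y j t)" for t
    using sum[of t] zero_le_power2[of "cmod (rotating_velocity \<omega> (\<zeta> i) t)"] zero_le_power2[of "wd (z i) t"]
    by linarith+
  then have "ennreal (?x i t / 2) \<le> ?L t" "ennreal (?y i t / 2) \<le> ?L t" for t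
    by (auto intro!: add_increasing2 ennreal_leI)
  then show "(\<integral>\<^sup>+ t\<in>{0..2*pi}. ennreal (?x i t / 2) \<partial>lborel) \<le> action N \<omega> \<zeta> z (2*pi)"
      and "(\<integral>\<^sup>+ t\<in>{0..2*pi}. ennreal (?y i t / 2) \<partial>lborel) \<le> action N \<omega> \<zeta> z (2*pi)"
    unfolding action_def rotating_velocity_def[symmetric]
    by (auto intro!: nn_integral_mono mult_right_mono)
qed

section \<open>Choreographies of bounded action\<close>

locale action_bounded_choreography =
  fixes N k :: nat and \<zeta> :: "nat \<Rightarrow> real \<Rightarrow> complex" and z :: "nat \<Rightarrow> real \<Rightarrow> real" and B :: real
  assumes N_pos: "0 < N"
    and loops: "in_Lambda N \<zeta> z"
    and chor: "simple_choreographic N \<zeta> z"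
    and mean_zero: "mean (z 0) = 0"
    and action_le: "action N (real k) \<zeta> z (2*pi) \<le> ennreal B"
    and B_nonneg: "0 \<le> B"
begin

lemma H1_cloop_component: "i < N \<Longrightarrow> H1_cloop (\<zeta> i)"
  and H1_loop_vertical: "i < N \<Longrightarrow> H1_loop (z i)"
  using loops unfolding in_Lambda_def H1_cloop_def by auto

lemma choreography_shift: "i < N \<Longrightarrow> \<zeta> i t = \<zeta> 0 (t + 2*pi*real i / real N)"
  and choreography_shift_vertical: "i < N \<Longrightarrow> z i t = z 0 (t + 2*pi*real i / real N)"
  using chor unfolding simple_choreographic_def by blast+

lemma rotating_velocity_L2_le:
  assumes "i < N"
  shows "(LINT t:{0..2*pi}|lborel. (cmod (rotating_velocity (real k) (\<zeta> i) t))\<^sup>2) \<le> 2 * B"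
  using set_integral_le_of_nn_integral_le[OF
      set_integrable_divide[OF rotating_velocity_square_integrable[OF H1_cloop_component[OF assms]]]
      _ order_trans[OF kinetic_nn_integral_le_action(1)[OF assms] action_le] B_nonneg]
  by simp

lemma vertical_velocity_L2_le:
  assumes "i < N"
  shows "(LINT t:{0..2*pi}|lborel. (wd (z i) t)\<^sup>2) \<le> 2 * B"
  using set_integral_le_of_nn_integral_le[OF
      set_integrable_divide[OF H1_loop_wd(2)[OF H1_loop_vertical[OF assms]]]
      _ order_trans[OF kinetic_nn_integral_le_action(2)[OF assms] action_le] B_nonneg]
  by simp

lemma vertical_abs_le:
  assumes "i < N"
  shows "\<bar>z i t\<bar> \<le> pi + B"
proof -
  have z0: "H1_loop (z 0)" using H1_loop_vertical N_pos by blast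
  have incr: "z 0 b - z 0 a = (LINT s:{a..b}|lborel. wd (z 0) s)" if "a \<le> b" for a b
    using H1_loop_indefinite_integral[OF z0, of b a b] that by simp
  have osc_raw: "norm (z 0 t - z 0 s) \<le> 2 * pi / 2 + (LINT t:{0..2*pi}|lborel. (norm (wd (z 0) t))\<^sup>2) / 2" for t s
    using H1_loop_wd(2)[OF z0]
    by (intro periodic_oscillation_le[where F = "z 0"] H1_loop_periodic[OF z0]
        H1_loop_integrable_wd[OF z0] incr) auto
  have osc: "\<bar>z 0 t - z 0 s\<bar> \<le> pi + B" for t s
    using osc_raw[of t s] vertical_velocity_L2_le[OF N_pos] by simp
  have "\<bar>z 0 t\<bar> \<le> pi + B" for t
    by (rule mean_zero_abs_le[OF H1_loop_continuous_on[OF z0] mean_zero osc])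
  then show ?thesis using choreography_shift_vertical[OF assms] by simp
qed

lemma rotated_oscillation_le:
  "cmod (exp (\<i> * of_real (real k * t)) * \<zeta> 0 t - exp (\<i> * of_real (real k * s)) * \<zeta> 0 s) \<le> pi + B"
proof -
  have \<zeta>0: "H1_cloop (\<zeta> 0)" using H1_cloop_component N_pos by blast
  let ?G = "\<lambda>s. exp (\<i> * of_real (real k * s)) * rotating_velocity (real k) (\<zeta> 0) s"
  have G: "set_integrable lborel {0..2*pi} ?G"
    by (intro set_integrable_continuous_mult continuous_intros rotating_velocity_integrable[OF \<zeta>0])
  have per: "exp (\<i> * of_real (real k * (t + 2*pi))) * \<zeta> 0 (t + 2*pi) = exp (\<i> * of_real (real k * t)) * \<zeta> 0 t"
    for t by (simp only: exp_i_nat_mult_periodic H1_cloop_periodic[OF \<zeta>0])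
  have "cmod (exp (\<i> * of_real (real k * t)) * \<zeta> 0 t - exp (\<i> * of_real (real k * s)) * \<zeta> 0 s)
      \<le> 2 * pi / 2 + (LINT t:{0..2*pi}|lborel. (cmod (?G t))\<^sup>2) / 2"
    by (rule periodic_oscillation_le[OF per _ G rotated_loop_increment[OF \<zeta>0]])
      (simp_all add: norm_mult rotating_velocity_square_integrable[OF \<zeta>0])
  then show ?thesis using rotating_velocity_L2_le[OF N_pos] by (simp add: norm_mult)
qed

lemma norm_deviation_le:
  assumes "i < N"
  shows "\<bar>cmod (\<zeta> i t) - cmod (\<zeta> 0 0)\<bar> \<le> pi + B"
proof -
  let ?x = "t + 2*pi*real i / real N"
  have "\<bar>cmod (\<zeta> i t) - cmod (\<zeta> 0 0)\<bar>
      = \<bar>cmod (exp (\<i> * of_real (real k * ?x)) * \<zeta> 0 ?x) - cmod (exp (\<i> * of_real (real k * 0)) * \<zeta> 0 0)\<bar>"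
    by (simp add: choreography_shift[OF assms] norm_mult)
  also have "\<dots> \<le> pi + B"
    by (rule order_trans[OF norm_triangle_ineq3 rotated_oscillation_le])
  finally show ?thesis .
qed

lemma cwd_L2_le:
  assumes "i < N"
  shows "(LINT t:{0..2*pi}|lborel. (cmod (cwd (\<zeta> i) t))\<^sup>2)
    \<le> 4 * B + 4 * pi * (real k)\<^sup>2 * (cmod (\<zeta> 0 0) + pi + B)\<^sup>2"
proof -
  let ?R = "cmod (\<zeta> 0 0) + pi + B" and ?v = "rotating_velocity (real k) (\<zeta> i)" and ?I = "{0..2*pi}"
  have \<zeta>i: "H1_cloop (\<zeta> i)" by (rule H1_cloop_component[OF assms])
  have v2: "set_integrable lborel ?I (\<lambda>t. (cmod (?v t))\<^sup>2)"
    by (rule rotating_velocity_square_integrable[OF \<zeta>i])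
  have ci: "set_integrable lborel ?I (\<lambda>t. 2 * (real k)\<^sup>2 * ?R\<^sup>2)"
    by (intro borel_integrable_atLeastAtMost' continuous_intros)
  have cwd2: "set_integrable lborel ?I (\<lambda>t. (cmod (cwd (\<zeta> i) t))\<^sup>2)"
    using \<zeta>i H1_loop_wd(2) unfolding H1_cloop_def norm_cwd_squared by (intro set_integral_add) auto
  have "(cmod (cwd (\<zeta> i) t))\<^sup>2 \<le> 2 * (cmod (?v t))\<^sup>2 + 2 * (real k)\<^sup>2 * ?R\<^sup>2" for t
  proof -
    have "cmod (\<zeta> i t) \<le> ?R" using norm_deviation_le[OF assms, of t] by linarith
    then have "(cmod (\<i> * of_real (real k) * \<zeta> i t))\<^sup>2 \<le> (real k)\<^sup>2 * ?R\<^sup>2"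
      by (simp add: norm_mult power_mult_distrib mult_left_mono power_mono)
    moreover have "(cmod (cwd (\<zeta> i) t))\<^sup>2 \<le> 2 * (cmod (?v t))\<^sup>2 + 2 * (cmod (- (\<i> * of_real (real k) * \<zeta> i t)))\<^sup>2"
      using power2_norm_add_le[of "?v t" "- (\<i> * of_real (real k) * \<zeta> i t)"]
      by (simp add: rotating_velocity_def)
    ultimately show ?thesis by simp
  qed
  then have "(LINT t:?I|lborel. (cmod (cwd (\<zeta> i) t))\<^sup>2)
      \<le> (LINT t:?I|lborel. 2 * (cmod (?v t))\<^sup>2 + 2 * (real k)\<^sup>2 * ?R\<^sup>2)"
    using cwd2 v2 ci by (intro set_integral_mono set_integral_add set_integrable_mult_right) auto
  also have "\<dots> = 2 * (LINT t:?I|lborel. (cmod (?v t))\<^sup>2) + 4 * pi * (real k)\<^sup>2 * ?R\<^sup>2"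
    using set_integral_add(2)[OF set_integrable_mult_right[OF v2, of 2] ci]
    by (simp add: set_lebesgue_integral_def)
  also have "\<dots> \<le> 4 * B + 4 * pi * (real k)\<^sup>2 * ?R\<^sup>2"
    using rotating_velocity_L2_le[OF assms] by simp
  finally show ?thesis .
qed

lemma h1_sq_vertical_le:
  assumes "i < N"
  shows "h1_sq (z i) \<le> 2 * pi * (pi + B)\<^sup>2 + 2 * B"
  using h1_sq_le[OF H1_loop_vertical[OF assms] vertical_abs_le[OF assms]] vertical_velocity_L2_le[OF assms]
  by simp

lemma h1_sq_horizontal_le:
  assumes "i < N"
  shows "h1_sq (\<lambda>t. Re (\<zeta> i t)) + h1_sq (\<lambda>t. Im (\<zeta> i t))
    \<le> 4 * pi * (1 + (real k)\<^sup>2) * (cmod (\<zeta> 0 0) + pi + B)\<^sup>2 + 4 * B"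
proof -
  let ?R = "cmod (\<zeta> 0 0) + pi + B" and ?I = "{0..2*pi}"
  let ?g1 = "wd (\<lambda>t. Re (\<zeta> i t))" and ?g2 = "wd (\<lambda>t. Im (\<zeta> i t))"
  have h1: "H1_loop (\<lambda>t. Re (\<zeta> i t))" "H1_loop (\<lambda>t. Im (\<zeta> i t))"
    using H1_cloop_component[OF assms] unfolding H1_cloop_def by auto
  have bound: "cmod (\<zeta> i t) \<le> ?R" for t using norm_deviation_le[OF assms, of t] by linarith
  have "h1_sq (\<lambda>t. Re (\<zeta> i t)) \<le> 2 * pi * ?R\<^sup>2 + (LINT t:?I|lborel. (?g1 t)\<^sup>2)"
    using abs_Re_le_cmod bound by (intro h1_sq_le[OF h1(1)]) (blast intro: order_trans)
  moreover have "h1_sq (\<lambda>t. Im (\<zeta> i t)) \<le> 2 * pi * ?R\<^sup>2 + (LINT t:?I|lborel. (?g2 t)\<^sup>2)"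
    using abs_Im_le_cmod bound by (intro h1_sq_le[OF h1(2)]) (blast intro: order_trans)
  moreover have "(LINT t:?I|lborel. (?g1 t)\<^sup>2) + (LINT t:?I|lborel. (?g2 t)\<^sup>2)
      = (LINT t:?I|lborel. (cmod (cwd (\<zeta> i) t))\<^sup>2)"
    unfolding norm_cwd_squared using H1_loop_wd(2)[OF h1(1)] H1_loop_wd(2)[OF h1(2)]
    by (simp add: set_integral_add)
  ultimately show ?thesis using cwd_L2_le[OF assms] by (simp add: algebra_simps)
qed

lemma Lambda_norm_le:
  "Lambda_norm N \<zeta> z \<le> sqrt (4 * pi * N * (1 + (real k)\<^sup>2)) * (cmod (\<zeta> 0 0) + pi + B)
    + sqrt (N * (6 * B + 2 * pi * (pi + B)\<^sup>2))"
proof -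
  let ?a = "4 * pi * (1 + (real k)\<^sup>2) * (cmod (\<zeta> 0 0) + pi + B)\<^sup>2" and ?c = "6 * B + 2 * pi * (pi + B)\<^sup>2"
  have "(\<Sum>i<N. h1_sq (\<lambda>t. Re (\<zeta> i t)) + h1_sq (\<lambda>t. Im (\<zeta> i t)) + h1_sq (z i))
      \<le> (\<Sum>i<N. ?a + ?c)"
    using h1_sq_horizontal_le h1_sq_vertical_le by (intro sum_mono) fastforce
  also have "\<dots> = N * (?a + ?c)" by simp
  finally have "(\<Sum>i<N. h1_sq (\<lambda>t. Re (\<zeta> i t)) + h1_sq (\<lambda>t. Im (\<zeta> i t)) + h1_sq (z i)) \<le> N * (?a + ?c)" .
  then have "Lambda_norm N \<zeta> z \<le> sqrt (N * ?a + N * ?c)"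
    unfolding Lambda_norm_def by (simp add: real_sqrt_le_mono distrib_left)
  also have "\<dots> \<le> sqrt (N * ?a) + sqrt (N * ?c)"
    using B_nonneg by (intro sqrt_add_le_add_sqrt) auto
  also have "sqrt (N * ?a) = sqrt (4 * pi * N * (1 + (real k)\<^sup>2) * (cmod (\<zeta> 0 0) + pi + B)\<^sup>2)"
    by (simp add: algebra_simps)
  also have "\<dots> = sqrt (4 * pi * N * (1 + (real k)\<^sup>2)) * (cmod (\<zeta> 0 0) + pi + B)"
    using B_nonneg pi_gt_zero by (simp only: real_sqrt_mult real_sqrt_abs) simp
  finally show ?thesis .
qed

lemma sgn_deviation_le:
  assumes i: "i < N" and nz: "\<zeta> 0 0 \<noteq> 0"
  shows "cmod (sgn (\<zeta> i t) - exp (- \<i> * of_real (real k * t))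
      * (exp (- \<i> * of_real (real k * (2*pi*real i / real N))) * sgn (\<zeta> 0 0)))
    \<le> 2 * (pi + B) / cmod (\<zeta> 0 0)"
proof -
  define x where "x = t + 2*pi*real i / real N"
  define W where "W y = exp (\<i> * of_real (real k * y)) * \<zeta> 0 y" for y
  define E where "E = exp (- \<i> * of_real (real k * x))"
  have norm_E: "cmod E = 1" by (simp add: E_def)
  have W0: "W 0 = \<zeta> 0 0" by (simp add: W_def)
  have "\<zeta> i t = exp (- \<i> * of_real (real k * x)) * exp (\<i> * of_real (real k * x)) * \<zeta> 0 x"
    by (simp add: choreography_shift[OF i] x_def flip: exp_add)
  then have "\<zeta> i t = E * W x" by (simp only: E_def W_def mult.assoc)
  moreover have "sgn E = E" using norm_E by (simp add: sgn_div_norm)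
  ultimately have "sgn (\<zeta> i t) = E * sgn (W x)" by (simp only: sgn_mult)
  moreover have "exp (- \<i> * of_real (real k * t)) * (exp (- \<i> * of_real (real k * (2*pi*real i / real N)))
      * sgn (\<zeta> 0 0)) = E * sgn (W 0)"
    by (simp add: E_def W0 x_def algebra_simps flip: exp_add)
  ultimately have "cmod (sgn (\<zeta> i t) - exp (- \<i> * of_real (real k * t))
      * (exp (- \<i> * of_real (real k * (2*pi*real i / real N))) * sgn (\<zeta> 0 0)))
      = cmod (sgn (W x) - sgn (W 0))"
    by (simp add: norm_E norm_mult flip: right_diff_distrib)
  also have "\<dots> \<le> 2 * cmod (W x - W 0) / cmod (W 0)"
    using nz W0 by (intro norm_sgn_diff_le) simp
  also have "\<dots> \<le> 2 * (pi + B) / cmod (\<zeta> 0 0)"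
    using rotated_oscillation_le[of x 0] unfolding W0 W_def by (simp add: divide_right_mono)
  finally show ?thesis .
qed

end

section \<open>Sequences of choreographies\<close>

lemma central_norm_at_top:
  fixes \<zeta> :: "nat \<Rightarrow> nat \<Rightarrow> real \<Rightarrow> complex" and z :: "nat \<Rightarrow> nat \<Rightarrow> real \<Rightarrow> real"
  assumes chor: "\<And>n. action_bounded_choreography N k (\<zeta> n) (z n) B"
    and unbounded: "filterlim (\<lambda>n. Lambda_norm N (\<zeta> n) (z n)) at_top sequentially"
  shows "filterlim (\<lambda>n. cmod (\<zeta> n 0 0)) at_top sequentially"
proof -
  define A where "A = sqrt (4 * pi * N * (1 + (real k)\<^sup>2))"
  define C where "C = sqrt (N * (6 * B + 2 * pi * (pi + B)\<^sup>2))"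
  have "Lambda_norm N (\<zeta> n) (z n) \<le> A * (cmod (\<zeta> n 0 0) + pi + B) + C" for n
    unfolding A_def C_def by (rule action_bounded_choreography.Lambda_norm_le[OF chor])
  then have "Lambda_norm N (\<zeta> n) (z n) \<le> A * cmod (\<zeta> n 0 0) + (A * (pi + B) + C)" for n
    by (simp add: algebra_simps)
  moreover have "0 < A"
    using action_bounded_choreography.N_pos[OF chor] by (simp add: A_def add_pos_nonneg)
  ultimately show ?thesis by (rule filterlim_at_top_of_linear_bound[OF unbounded])
qed

lemma norm_uniformly_at_top:
  fixes \<zeta> :: "nat \<Rightarrow> nat \<Rightarrow> real \<Rightarrow> complex" and z :: "nat \<Rightarrow> nat \<Rightarrow> real \<Rightarrow> real"
  assumes chor: "\<And>n. action_bounded_choreography N k (\<zeta> n) (z n) B"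
    and central: "filterlim (\<lambda>n. cmod (\<zeta> n 0 0)) at_top sequentially" and i: "i < N"
  shows "eventually (\<lambda>n. \<forall>t. M \<le> cmod (\<zeta> n i t)) sequentially"
  using central[unfolded filterlim_at_top, rule_format, of "M + pi + B"]
proof eventually_elim
  case (elim n)
  show ?case
  proof
    fix t
    show "M \<le> cmod (\<zeta> n i t)"
      using elim action_bounded_choreography.norm_deviation_le[OF chor i, of n t] by linarith
  qed
qed

lemma direction_uniform_limit:
  fixes \<zeta> :: "nat \<Rightarrow> nat \<Rightarrow> real \<Rightarrow> complex" and z :: "nat \<Rightarrow> nat \<Rightarrow> real \<Rightarrow> real"
  assumes chor: "\<And>n. action_bounded_choreography N k (\<zeta> n) (z n) B"
    and central: "filterlim (\<lambda>n. cmod (\<zeta> n 0 0)) at_top sequentially"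
  shows "\<exists>r. strict_mono r \<and> (\<exists>u. \<forall>i<N. cmod (u i) = 1 \<and>
    uniform_limit UNIV (\<lambda>n t. \<zeta> (r n) i t / of_real (cmod (\<zeta> (r n) i t)))
      (\<lambda>t. exp (- \<i> * of_real (real k * t)) * u i) sequentially)"
proof -
  have large: "eventually (\<lambda>n. 1 \<le> cmod (\<zeta> n 0 0)) sequentially"
    using central by (simp add: filterlim_at_top)
  have "eventually (\<lambda>n. \<zeta> n 0 0 \<noteq> 0) sequentially"
    using large by eventually_elim auto
  from convergent_subseq_sgn[OF this] obtain r u0 where r: "strict_mono r" and u0: "cmod u0 = 1"
    and lim: "(\<lambda>n. sgn (\<zeta> (r n) 0 0)) \<longlonglongrightarrow> u0"
    by blast
  have "(\<lambda>n. 2 * (pi + B) / cmod (\<zeta> (r n) 0 0)) \<longlonglongrightarrow> 0"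
    by (intro tendsto_divide_0[OF tendsto_const] filterlim_at_top_imp_at_infinity
        filterlim_compose[OF central filterlim_subseq[OF r]])
  moreover have "eventually (\<lambda>n. \<forall>t. cmod (sgn (\<zeta> (r n) i t) - exp (- \<i> * of_real (real k * t))
      * (exp (- \<i> * of_real (real k * (2*pi*real i / real N))) * sgn (\<zeta> (r n) 0 0)))
      \<le> 2 * (pi + B) / cmod (\<zeta> (r n) 0 0)) sequentially" if "i < N" for i
    using eventually_subseq[OF r large]
  proof eventually_elim
    case (elim n)
    then have "\<zeta> (r n) 0 0 \<noteq> 0" by auto
    then show ?case using action_bounded_choreography.sgn_deviation_le[OF chor that] by blast
  qed
  ultimately have "uniform_limit UNIV (\<lambda>n t. \<zeta> (r n) i t / of_real (cmod (\<zeta> (r n) i t)))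
      (\<lambda>t. exp (- \<i> * of_real (real k * t)) * (exp (- \<i> * of_real (real k * (2*pi*real i / real N))) * u0))
      sequentially" if "i < N" for i
    unfolding complex_div_cmod_eq_sgn using that
    by (intro uniform_limit_of_unit_factor[where a = "\<lambda>n. exp (- \<i> * of_real (real k * (2*pi*real i / real N)))
        * sgn (\<zeta> (r n) 0 0)"] tendsto_mult_left lim) (auto simp: norm_exp_eq_Re)
  then show ?thesis
    using r u0
    by (intro exI[of _ r] conjI exI[of _ "\<lambda>i. exp (- \<i> * of_real (real k * (2*pi*real i / real N))) * u0"]
        allI impI) (simp_all add: norm_mult)
qed

theorem lemma5p2:
  fixes N k :: nat
    and \<zeta> :: "nat \<Rightarrow> nat \<Rightarrow> real \<Rightarrow> complex"
    and z :: "nat \<Rightarrow> nat \<Rightarrow> real \<Rightarrow> real"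
  assumes N2: "N \<ge> 2"
    and k: "1 \<le> k" "k \<le> N - 1"
    and loops: "\<And>n. in_Lambda N (\<zeta> n) (z n)"
    and chor: "\<And>n. simple_choreographic N (\<zeta> n) (z n)"
    and mean0: "\<And>n. mean (z n 0) = 0"
    and unbounded: "filterlim (\<lambda>n. Lambda_norm N (\<zeta> n) (z n)) at_top sequentially"
    and bounded: "\<exists>B::real. \<forall>n. action N (real k) (\<zeta> n) (z n) (2*pi) \<le> ennreal B"
  shows "(\<exists>C. \<forall>n. \<forall>i<N. h1_norm (z n i) \<le> C)
    \<and> (\<forall>i<N. \<forall>M::real. eventually (\<lambda>n. \<forall>t. M \<le> cmod (\<zeta> n i t)) sequentially)
    \<and> (\<exists>r::nat \<Rightarrow> nat. strict_mono r \<and> (\<exists>u::nat \<Rightarrow> complex. \<forall>i<N. cmod (u i) = 1 \<and>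
         uniform_limit UNIV (\<lambda>n t. \<zeta> (r n) i t / of_real (cmod (\<zeta> (r n) i t)))
            (\<lambda>t. exp (- \<i> * of_real (real k * t)) * u i) sequentially))"
proof -
  obtain B where "0 \<le> B" and "\<And>n. action N (real k) (\<zeta> n) (z n) (2*pi) \<le> ennreal B"
    using bounded by (meson ennreal_leI max.cobounded1 max.cobounded2 order_trans)
  then have bounded_n: "action_bounded_choreography N k (\<zeta> n) (z n) B" for n
    using N2 loops chor mean0 by unfold_locales auto
  have central: "filterlim (\<lambda>n. cmod (\<zeta> n 0 0)) at_top sequentially"
    by (rule central_norm_at_top[OF bounded_n unbounded])
  have "h1_norm (z n i) \<le> sqrt (2 * pi * (pi + B)\<^sup>2 + 2 * B)" if "i < N" for n i
    unfolding h1_norm_def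
    by (intro real_sqrt_le_mono action_bounded_choreography.h1_sq_vertical_le[OF bounded_n that])
  then show ?thesis
    using norm_uniformly_at_top[OF bounded_n central] direction_uniform_limit[OF bounded_n central]
    by blast
qed

end
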